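(* Let $\{\ell_k\}_{k\in\mathbb{N}_0}$ be a sequence of nonnegative integers. Then the sequence $\{a^{\ell_k}\}_{k\in\mathbb{N}_0}$ is a positive sequence for every $a\in\mathbb{R}$ if and only if there exist $d\in\mathbb{N}_0$ and $\ell_0\in 2\mathbb{N}_0$ such that $\ell_k=kd+\ell_0$ for all $k\in\mathbb{N}_0$ (i.e. $\ell_0$ is even and $\{\ell_k\}$ is a nondecreasing arithmetic progression).
   Context: A sequence of real numbers $\{s_k\}_{k\in\mathbb{N}_0}$ is called positive if for every $n\in\mathbb{N}_0$ the Hankel matrix $(s_{i+j})_{i,j=0}^n$ is positive semidefinite. The convention $0^0=1$ is used. *)

theory Defs
  imports Main "HOL-Analysis.Analysis"
begin

definition hankel_psd :: "(nat \<Rightarrow> real) \<Rightarrow> nat \<Rightarrow> bool" where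
  "hankel_psd s n \<longleftrightarrow>
     (\<forall>c :: nat \<Rightarrow> real. (\<Sum>i\<le>n. \<Sum>j\<le>n. c i * c j * s (i + j)) \<ge> 0)"

definition positive_sequence :: "(nat \<Rightarrow> real) \<Rightarrow> bool" where
  "positive_sequence s \<longleftrightarrow> (\<forall>n. hankel_psd s n)"

end

theory Submission
  imports Defs
begin

text \<open>Testing the Hankel forms of \<open>k \<mapsto> a ^ l k\<close> on vectors supported on two indices
  \<open>i \<noteq> j\<close> gives \<open>a ^ (2 l(i+j)) \<le> a ^ (l(2i) + l(2j))\<close> for all \<open>a > 0\<close>; taking \<open>a = 2\<close> and
  \<open>a = 1/2\<close> forces \<open>l(2i) + l(2j) = 2 l(i+j)\<close>, and this midpoint equation makes \<open>l\<close> affine.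
  Nonnegativity of \<open>l\<close> makes the slope nonnegative, and \<open>a = -1\<close> shows that \<open>l 0\<close> is
  even. Conversely, for \<open>l k = k d + l 0\<close> the Hankel form equals \<open>a ^ l 0 (\<Sum>i\<le>n. c i a ^ (i d))\<^sup>2\<close>.\<close>

lemma sum_two_point:
  fixes f :: "'a \<Rightarrow> 'b :: comm_semiring_1"
  assumes "finite A" "i \<in> A" "j \<in> A" "i \<noteq> j"
  shows "(\<Sum>k\<in>A. (if k = i then x else if k = j then y else 0) * f k) = x * f i + y * f j"
proof -
  have "(\<Sum>k\<in>A. (if k = i then x else if k = j then y else 0) * f k)
      = (\<Sum>k\<in>A. (if k = i then x * f k else 0) + (if k = j then y * f k else 0))"
    using assms(4) by (intro sum.cong) auto
  also have "\<dots> = x * f i + y * f j"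
    using assms(1-3) by (simp add: sum.distrib)
  finally show ?thesis .
qed

lemma hankel_psd_two_point:
  assumes "hankel_psd s n" "i \<le> n" "j \<le> n" "i \<noteq> j"
  shows "x\<^sup>2 * s (2 * i) + 2 * x * y * s (i + j) + y\<^sup>2 * s (2 * j) \<ge> 0"
proof -
  define c where "c = (\<lambda>k. if k = i then x else if k = j then y else 0)"
  have two_point: "(\<Sum>k\<le>n. c k * f k) = x * f i + y * f j" for f :: "nat \<Rightarrow> real"
    unfolding c_def using assms(2-4) by (intro sum_two_point) auto
  have "0 \<le> (\<Sum>a\<le>n. \<Sum>b\<le>n. c a * c b * s (a + b))"
    using assms(1) unfolding hankel_psd_def by blast
  also have "\<dots> = (\<Sum>a\<le>n. c a * (\<Sum>b\<le>n. c b * s (a + b)))"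
    by (simp add: sum_distrib_left mult.assoc)
  also have "\<dots> = x * (x * s (i + i) + y * s (i + j)) + y * (x * s (j + i) + y * s (j + j))"
    by (simp only: two_point)
  also have "\<dots> = x\<^sup>2 * s (2 * i) + 2 * x * y * s (i + j) + y\<^sup>2 * s (2 * j)"
    by (simp only: mult_2 [of i] mult_2 [of j] add.commute [of j i])
      (simp add: power2_eq_square algebra_simps)
  finally show ?thesis .
qed

lemma hankel_psd_minor:
  assumes "hankel_psd s n" "i \<le> n" "j \<le> n" "i \<noteq> j" "s (2 * i) > 0"
  shows "(s (i + j))\<^sup>2 \<le> s (2 * i) * s (2 * j)"
proof -
  have "0 \<le> (s (i + j))\<^sup>2 * s (2 * i) + 2 * s (i + j) * (- s (2 * i)) * s (i + j)
              + (- s (2 * i))\<^sup>2 * s (2 * j)"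
    using hankel_psd_two_point[OF assms(1-4)] .
  also have "\<dots> = s (2 * i) * (s (2 * i) * s (2 * j) - (s (i + j))\<^sup>2)"
    by (simp add: power2_eq_square algebra_simps)
  finally show ?thesis
    using assms(5) by (simp add: zero_le_mult_iff)
qed

lemma positive_power_sequence_midpoint:
  assumes "\<forall>a :: real. positive_sequence (\<lambda>k. a ^ l k)" "i \<noteq> j"
  shows "l (2 * i) + l (2 * j) = 2 * l (i + j)"
proof -
  have le: "a ^ (2 * l (i + j)) \<le> a ^ (l (2 * i) + l (2 * j))" if "a > 0" for a :: real
  proof -
    have "hankel_psd (\<lambda>k. a ^ l k) (max i j)"
      using assms(1) unfolding positive_sequence_def by blast
    from hankel_psd_minor[OF this _ _ assms(2)] that
    show ?thesis by (simp add: power_add power_mult mult.commute[of 2])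
  qed
  have "2 * l (i + j) \<le> l (2 * i) + l (2 * j)"
    using le[of 2] by simp
  moreover have "l (2 * i) + l (2 * j) \<le> 2 * l (i + j)"
    using le[of "1/2"] by (simp add: power_decreasing_iff)
  ultimately show ?thesis by linarith
qed

lemma midpoint_eq_vanishing:
  fixes g :: "nat \<Rightarrow> 'a :: {idom, ring_char_0}"
  assumes mid: "\<And>i j. i \<noteq> j \<Longrightarrow> g (2 * i) + g (2 * j) = 2 * g (i + j)"
    and "g 0 = 0" "g 1 = 0"
  shows "g m = 0"
proof (induction m rule: less_induct)
  case (less m)
  consider "m \<le> 1" | p where "m = 2 * p" "p \<ge> 1" | p where "m = 2 * p + 1" "p \<ge> 1"
  proof -
    obtain p where "m = 2 * p \<or> m = 2 * p + 1"
      by (metis evenE oddE)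
    with that show ?thesis
      by (cases "p = 0") auto
  qed
  then show ?case
  proof cases
    case 1
    with assms(2,3) show ?thesis by (cases m) auto
  next
    case (2 p)
    have "g (2 * p) + g 0 = 2 * g p"
      using mid[of p 0] \<open>p \<ge> 1\<close> by simp
    with less[of p] 2 assms(2) show ?thesis by simp
  next
    case (3 p)
    have "p + (p + 1) = m"
      using 3 by simp
    then have "2 * g m = g (2 * p) + g (2 * (p + 1))"
      using mid[of p "p + 1"] by simp
    also have "g (2 * (p + 1)) = 2 * g (p + 1)"
      using mid[of "p + 1" 0] assms(2) by simp
    finally show ?thesis
      using less[of "2 * p"] less[of "p + 1"] 3 by simp
  qed
qed

lemma midpoint_eq_affine:
  fixes f :: "nat \<Rightarrow> 'a :: {idom, ring_char_0}"
  assumes mid: "\<And>i j. i \<noteq> j \<Longrightarrow> f (2 * i) + f (2 * j) = 2 * f (i + j)"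
  shows "f m = f 0 + of_nat m * (f 1 - f 0)"
proof -
  define g where "g k = f k - f 0 - of_nat k * (f 1 - f 0)" for k
  have "g m = 0"
  proof (rule midpoint_eq_vanishing)
    show "g (2 * i) + g (2 * j) = 2 * g (i + j)" if "i \<noteq> j" for i j
      using mid[OF that] unfolding g_def by (simp add: algebra_simps)
  qed (simp_all add: g_def)
  then show ?thesis
    unfolding g_def by (simp add: algebra_simps)
qed

lemma affine_nat_slope_nonneg:
  fixes d :: int
  assumes "\<And>m. 0 \<le> b + int m * d"
  shows "d \<ge> 0"
proof (rule ccontr)
  assume "\<not> d \<ge> 0"
  then have "int (nat b + 1) * d \<le> int (nat b + 1) * (-1)"
    by (intro mult_left_mono) auto
  with assms[of "nat b + 1"] show False
    by (simp add: int_nat_eq split: if_splits)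
qed

lemma positive_sequence_arithmetic_exponents:
  fixes a :: real
  assumes "even e"
  shows "positive_sequence (\<lambda>k. a ^ (k * d + e))"
  unfolding positive_sequence_def hankel_psd_def
proof (intro allI)
  fix n and c :: "nat \<Rightarrow> real"
  have "(\<Sum>i\<le>n. \<Sum>j\<le>n. c i * c j * a ^ ((i + j) * d + e))
      = (\<Sum>i\<le>n. \<Sum>j\<le>n. a ^ e * ((c i * a ^ (i * d)) * (c j * a ^ (j * d))))"
    by (simp only: add_mult_distrib power_add) (simp add: mult_ac)
  also have "\<dots> = a ^ e * (\<Sum>i\<le>n. c i * a ^ (i * d))\<^sup>2"
    by (simp only: power2_eq_square sum_product) (simp only: sum_distrib_left)
  also have "\<dots> \<ge> 0"
    using assms by (simp add: zero_le_even_power)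
  finally show "(\<Sum>i\<le>n. \<Sum>j\<le>n. c i * c j * a ^ ((i + j) * d + e)) \<ge> 0" .
qed

theorem mainTheorem3:
  fixes l :: "nat \<Rightarrow> nat"
  shows "(\<forall>a :: real. positive_sequence (\<lambda>k. a ^ l k)) \<longleftrightarrow>
         (\<exists>d :: nat. even (l 0) \<and> (\<forall>k. l k = k * d + l 0))"
proof
  assume pos: "\<forall>a :: real. positive_sequence (\<lambda>k. a ^ l k)"
  have "hankel_psd (\<lambda>k. (-1 :: real) ^ l k) 1"
    using pos unfolding positive_sequence_def by blast
  from hankel_psd_two_point[OF this, of 0 1 1 0] have "(-1 :: real) ^ l 0 \<ge> 0"
    by simp
  then have even: "even (l 0)"
    by (simp add: minus_one_power_iff split: if_splits)
  define d where "d = int (l 1) - int (l 0)"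
  have affine: "int (l m) = int (l 0) + int m * d" for m
    unfolding d_def
    using positive_power_sequence_midpoint[OF pos]
    by (intro midpoint_eq_affine) (metis of_nat_add of_nat_mult of_nat_numeral)
  have "d \<ge> 0"
    by (rule affine_nat_slope_nonneg[of "int (l 0)"]) (simp flip: affine)
  with affine have "l k = k * nat d + l 0" for k
    by (metis add.commute int_nat_eq nat_int of_nat_add of_nat_mult)
  with even show "\<exists>d. even (l 0) \<and> (\<forall>k. l k = k * d + l 0)" by blast
next
  assume "\<exists>d. even (l 0) \<and> (\<forall>k. l k = k * d + l 0)"
  then obtain d where "even (l 0)" and l: "\<And>k. l k = k * d + l 0" by blast
  have "(\<lambda>k. a ^ l k) = (\<lambda>k. a ^ (k * d + l 0))" for a :: real
    by (simp only: l[symmetric])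
  with positive_sequence_arithmetic_exponents[OF \<open>even (l 0)\<close>]
  show "\<forall>a :: real. positive_sequence (\<lambda>k. a ^ l k)" by simp
qed

end
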